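(* Let $\mathbb{K}=\mathbb{R}$ or $\mathbb{C}$, let $n>r\ge1$ be integers, let $X$ be a real symmetric $n\times n$ matrix with eigenvalues $\lambda_1,\ldots,\lambda_n$, and let $\theta_1,\ldots,\theta_r$ be nonzero real numbers. Assume: (H) $\lambda_1,\ldots,\lambda_n$ are pairwise distinct, and there are pairwise distinct indices $i_1,\ldots,i_{r-1}\in\{1,\ldots,n\}$ such that $\{\lambda_{i_1}+\theta_1,\ldots,\lambda_{i_{r-1}}+\theta_{r-1}\}\cap\{\lambda_1,\ldots,\lambda_n\}=\emptyset$. For $g=[g_1,\ldots,g_r]\in\mathbb{K}^{n\times r}$ define $\widetilde X_g=X+\sum_{i=1}^r\theta_iu_iu_i^*$, where either $(u_1,\ldots,u_r)=\frac1{\sqrt n}(g_1,\ldots,g_r)$ for all $g$, or $(u_1,\ldots,u_r)$ is the orthonormal family obtained from the columns of $g$ by the Gram–Schmidt process (defined when these columns are linearly independent). Then, in either case, the set of $g\in\mathbb{K}^{n\times r}$ such that $\widetilde X_g$ is defined and $\widetilde X_g$ and $X$ have at least one eigenvalue in common has Lebesgue measure zero.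
   Context: Lebesgue measure on $\mathbb{K}^{n\times r}$ is that of $\mathbb{R}^{nr}$ (if $\mathbb{K}=\mathbb{R}$) or $\mathbb{R}^{2nr}$ (if $\mathbb{K}=\mathbb{C}$) via real coordinates. Gram–Schmidt is with respect to $\langle v,w\rangle=\sum_k\overline{v_k}w_k$. *)

theory Defs
  imports "HOL-Analysis.Analysis"
begin

text \<open>n x n matrices are represented as functions nat => nat => 'a (entries (a,b) with a,b < n);
  vectors in K^n as functions nat => 'a (entries a < n); indices are 0-based.\<close>

definition is_eigenvalue :: "nat \<Rightarrow> (nat \<Rightarrow> nat \<Rightarrow> 'a::field) \<Rightarrow> 'a \<Rightarrow> bool" where
  "is_eigenvalue n A \<mu> \<longleftrightarrow>
     (\<exists>v. (\<exists>a<n. v a \<noteq> 0) \<and> (\<forall>a<n. (\<Sum>b<n. A a b * v b) = \<mu> * v a))"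

definition lin_indep_cols :: "nat \<Rightarrow> nat \<Rightarrow> (nat \<Rightarrow> nat \<Rightarrow> 'a::field) \<Rightarrow> bool" where
  "lin_indep_cols n r c \<longleftrightarrow>
     (\<forall>\<alpha>. (\<forall>a<n. (\<Sum>j<r. \<alpha> j * c j a) = 0) \<longrightarrow> (\<forall>j<r. \<alpha> j = 0))"

definition cinner :: "nat \<Rightarrow> (nat \<Rightarrow> complex) \<Rightarrow> (nat \<Rightarrow> complex) \<Rightarrow> complex" where
  "cinner n v w = (\<Sum>k<n. cnj (v k) * w k)"

definition cnorm :: "nat \<Rightarrow> (nat \<Rightarrow> complex) \<Rightarrow> real" where
  "cnorm n v = sqrt (\<Sum>k<n. (cmod (v k))\<^sup>2)"

primrec gs_list :: "nat \<Rightarrow> (nat \<Rightarrow> nat \<Rightarrow> complex) \<Rightarrow> nat \<Rightarrow> (nat \<Rightarrow> complex) list" where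
  "gs_list n c 0 = []"
| "gs_list n c (Suc k) =
     (let us = gs_list n c k;
          w = (\<lambda>a. c k a - (\<Sum>j<length us. cinner n (us ! j) (c k) * (us ! j) a))
      in us @ [(\<lambda>a. w a / complex_of_real (cnorm n w))])"

definition gram_schmidt :: "nat \<Rightarrow> nat \<Rightarrow> (nat \<Rightarrow> nat \<Rightarrow> complex) \<Rightarrow> nat \<Rightarrow> nat \<Rightarrow> complex" where
  "gram_schmidt n r c = (\<lambda>i. gs_list n c r ! i)"

definition scaled_cols :: "nat \<Rightarrow> (nat \<Rightarrow> nat \<Rightarrow> complex) \<Rightarrow> nat \<Rightarrow> nat \<Rightarrow> complex" where
  "scaled_cols n c = (\<lambda>i a. c i a / complex_of_real (sqrt (real n)))"

definition perturb :: "nat \<Rightarrow> (nat \<Rightarrow> nat \<Rightarrow> real) \<Rightarrow> (nat \<Rightarrow> real) \<Rightarrow> (nat \<Rightarrow> nat \<Rightarrow> complex)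
    \<Rightarrow> nat \<Rightarrow> nat \<Rightarrow> complex" where
  "perturb r X \<theta> u = (\<lambda>a b. complex_of_real (X a b) + (\<Sum>i<r. complex_of_real (\<theta> i) * u i a * cnj (u i b)))"

definition cols_R :: "(nat \<times> nat \<Rightarrow> real) \<Rightarrow> nat \<Rightarrow> nat \<Rightarrow> complex" where
  "cols_R g = (\<lambda>j a. complex_of_real (g (a, j)))"

definition cols_C :: "(nat \<times> nat \<Rightarrow> complex) \<Rightarrow> nat \<Rightarrow> nat \<Rightarrow> complex" where
  "cols_C g = (\<lambda>j a. g (a, j))"

definition leb_R :: "nat \<Rightarrow> nat \<Rightarrow> (nat \<times> nat \<Rightarrow> real) measure" where
  "leb_R n r = completion (PiM ({..<n} \<times> {..<r}) (\<lambda>_. lborel))"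

definition leb_C :: "nat \<Rightarrow> nat \<Rightarrow> (nat \<times> nat \<Rightarrow> complex) measure" where
  "leb_C n r = completion (PiM ({..<n} \<times> {..<r}) (\<lambda>_. lborel))"

definition shares_eigenvalue :: "nat \<Rightarrow> (nat \<Rightarrow> nat \<Rightarrow> complex) \<Rightarrow> (nat \<Rightarrow> nat \<Rightarrow> real) \<Rightarrow> bool" where
  "shares_eigenvalue n A X \<longleftrightarrow>
     (\<exists>\<mu>. is_eigenvalue n A \<mu> \<and> is_eigenvalue n (\<lambda>a b. complex_of_real (X a b)) \<mu>)"

end

theory Submission
  imports Defs "Jordan_Normal_Form.Char_Poly"
begin

text \<open>
  Fix an eigenvalue \<lambda> of X. It is an eigenvalue of X_g iff det (X_g - \<lambda>) = 0. For the scaled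
  columns this determinant is a polynomial in the real coordinates of g; for Gram--Schmidt it
  becomes one after multiplying X_g by the product of the squared norms of the Gram--Schmidt
  vectors with cleared denominators. The zero set of a polynomial that does not vanish
  identically is Lebesgue-null (Fubini and induction on the number of variables), so it suffices
  to exhibit one g for which \<lambda> is not an eigenvalue of X_g. Take for u_i the eigenvectors
  e_(\<kappa> i) of X, with \<kappa> injective: X_g then has the eigenvalues \<lambda>_(\<kappa> i) + \<theta>_i and the
  remaining \<lambda>_k, and (H) allows \<kappa> to be chosen so that none of them is \<lambda>. A union over the n
  eigenvalues of X finishes the proof.
\<close>

section \<open>Polynomial functions and their zero sets\<close>

inductive poly_fun :: "'v set \<Rightarrow> (('v \<Rightarrow> 'b::euclidean_space) \<Rightarrow> real) \<Rightarrow> bool" for V where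
  const: "poly_fun V (\<lambda>x. c)"
| coord: "v \<in> V \<Longrightarrow> b \<in> Basis \<Longrightarrow> poly_fun V (\<lambda>x. x v \<bullet> b)"
| add: "poly_fun V f \<Longrightarrow> poly_fun V g \<Longrightarrow> poly_fun V (\<lambda>x. f x + g x)"
| mult: "poly_fun V f \<Longrightarrow> poly_fun V g \<Longrightarrow> poly_fun V (\<lambda>x. f x * g x)"

lemma poly_fun_diff: "poly_fun V f \<Longrightarrow> poly_fun V g \<Longrightarrow> poly_fun V (\<lambda>x. f x - g x)"
  using poly_fun.add[OF _ poly_fun.mult[OF poly_fun.const[of V "-1"]], of f g] by simp

lemma poly_fun_fix_coord: "poly_fun V f \<Longrightarrow> poly_fun (V - {v}) (\<lambda>x. f (x(v := y)))"
proof (induction rule: poly_fun.induct)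
  case (coord w b)
  then show ?case
    by (cases "w = v") (auto intro: poly_fun.intros)
qed (auto intro: poly_fun.intros)

lemma poly_fun_slice: "poly_fun V f \<Longrightarrow> poly_fun {()} (\<lambda>z. f (x(v := z ())))"
proof (induction rule: poly_fun.induct)
  case (coord w b)
  then show ?case
    by (cases "w = v") (auto intro: poly_fun.intros)
qed (auto intro: poly_fun.intros)

lemma measurable_poly_fun_comp:
  "poly_fun V f \<Longrightarrow> (\<And>v. v \<in> V \<Longrightarrow> (\<lambda>y. h y v) \<in> borel_measurable M) \<Longrightarrow>
    (\<lambda>y. f (h y)) \<in> borel_measurable M"
  by (induction rule: poly_fun.induct) auto

lemma borel_measurable_poly_fun:
  "poly_fun V f \<Longrightarrow> f \<in> borel_measurable (PiM V (\<lambda>_. lborel::'b::euclidean_space measure))"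
  using measurable_poly_fun_comp[of V f "\<lambda>x. x"] by (simp add: measurable_component_singleton)

lemma null_sets_PiM_insert:
  fixes A :: "('v \<Rightarrow> 'b::euclidean_space) set"
  assumes "finite W" "v \<notin> W"
    and A: "A \<in> sets (PiM (insert v W) (\<lambda>_. lborel))"
    and fibres: "AE x in PiM W (\<lambda>_. lborel). {y. x(v := y) \<in> A} \<in> null_sets lborel"
  shows "A \<in> null_sets (PiM (insert v W) (\<lambda>_. lborel))"
proof -
  interpret product_sigma_finite "\<lambda>_. lborel :: 'b measure"
    by unfold_locales
  have "emeasure (PiM (insert v W) (\<lambda>_. lborel)) A
      = (\<integral>\<^sup>+ x. \<integral>\<^sup>+ y. indicator A (x(v := y)) \<partial>lborel \<partial>PiM W (\<lambda>_. lborel))"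
    using A assms(1,2) by (simp add: product_nn_integral_insert[symmetric])
  also have "\<dots> = (\<integral>\<^sup>+ x. 0 \<partial>PiM W (\<lambda>_. lborel::'b measure))"
  proof (rule nn_integral_cong_AE)
    show "AE x in PiM W (\<lambda>_. lborel). (\<integral>\<^sup>+ y. indicator A (x(v := y)) \<partial>lborel) = 0"
      using fibres
    proof (rule eventually_mono)
      fix x assume null: "{y. x(v := y) \<in> A} \<in> null_sets lborel"
      have "(\<integral>\<^sup>+ y. indicator A (x(v := y)) \<partial>lborel) = (\<integral>\<^sup>+ y. indicator {y. x(v := y) \<in> A} y \<partial>lborel)"
        by (simp add: indicator_def)
      also have "\<dots> = 0"
        using nn_integral_indicator[OF null_setsD2[OF null]] null_setsD1[OF null] by simp
      finally show "(\<integral>\<^sup>+ y. indicator A (x(v := y)) \<partial>lborel) = 0" .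
    qed
  qed
  finally show ?thesis
    using A by (simp add: null_sets_def)
qed

text \<open>Over a point outside the null zero set of \<open>f\<close> with the new variable frozen, the fibre of
  the zero set is the zero set of a nonvanishing polynomial in that variable alone.\<close>

lemma null_sets_poly_fun_zeros_from_line:
  fixes f :: "('v \<Rightarrow> 'b::euclidean_space) \<Rightarrow> real"
  assumes line: "\<And>g y0. poly_fun {()} g \<Longrightarrow> g (\<lambda>_. y0) \<noteq> 0 \<Longrightarrow>
      {y. g (\<lambda>_. y) = 0} \<in> null_sets (lborel::'b measure)"
    and "finite V" "poly_fun V f" "x0 \<in> space (PiM V (\<lambda>_. lborel::'b measure))" "f x0 \<noteq> 0"
  shows "{x \<in> space (PiM V (\<lambda>_. lborel)). f x = 0} \<in> null_sets (PiM V (\<lambda>_. lborel))"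
  using assms(2-)
proof (induction V arbitrary: f x0 rule: finite_induct)
  case empty
  then have "{x \<in> space (PiM {} (\<lambda>_. lborel::'b measure)). f x = 0} = {}"
    by (auto simp: space_PiM)
  then show ?case by (simp only:) simp
next
  case (insert v W)
  let ?N = "PiM W (\<lambda>_. lborel::'b measure)"
  let ?f' = "\<lambda>x. f (x(v := x0 v))"
  have "poly_fun W ?f'"
    using poly_fun_fix_coord[OF insert.prems(1)] insert.hyps by (metis Diff_insert_absorb)
  moreover have "restrict x0 W \<in> space ?N"
    by (simp add: space_PiM)
  moreover have "(restrict x0 W)(v := x0 v) = x0"
    using insert.prems(2) by (auto simp: space_PiM PiE_def extensional_def fun_eq_iff)
  ultimately have null: "{x \<in> space ?N. ?f' x = 0} \<in> null_sets ?N"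
    using insert.IH insert.prems(3) by fastforce
  show ?case
  proof (rule null_sets_PiM_insert[OF insert.hyps])
    show "{x \<in> space (PiM (insert v W) (\<lambda>_. lborel)). f x = 0} \<in> sets (PiM (insert v W) (\<lambda>_. lborel))"
      using borel_measurable_poly_fun[OF insert.prems(1)] by measurable
    show "AE x in ?N. {y. x(v := y) \<in> {x \<in> space (PiM (insert v W) (\<lambda>_. lborel)). f x = 0}} \<in> null_sets lborel"
      using AE_space AE_not_in[OF null]
    proof eventually_elim
      case (elim x)
      then have "{y. x(v := y) \<in> {x \<in> space (PiM (insert v W) (\<lambda>_. lborel)). f x = 0}} = {y. f (x(v := y)) = 0}"
        by (auto simp: space_PiM PiE_def extensional_def)
      moreover have "{y. f (x(v := y)) = 0} \<in> null_sets lborel"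
        using line[OF poly_fun_slice[OF insert.prems(1), of x v], of "x0 v"] elim by (simp add: fun_upd_def)
      ultimately show ?case by simp
    qed
  qed
qed

lemma poly_fun_real_line_poly:
  "poly_fun V (g :: (unit \<Rightarrow> real) \<Rightarrow> real) \<Longrightarrow> \<exists>p. \<forall>y. g (\<lambda>_. y) = poly p y"
proof (induction rule: poly_fun.induct)
  case (const c)
  show ?case by (intro exI[of _ "[:c:]"]) simp
next
  case (coord v b)
  then show ?case by (intro exI[of _ "[:0, 1:]"]) simp
next
  case (add f g)
  then obtain p q where "\<forall>y. f (\<lambda>_. y) = poly p y" "\<forall>y. g (\<lambda>_. y) = poly q y" by blast
  then show ?case by (intro exI[of _ "p + q"]) simp
next
  case (mult f g)
  then obtain p q where "\<forall>y. f (\<lambda>_. y) = poly p y" "\<forall>y. g (\<lambda>_. y) = poly q y" by blast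
  then show ?case by (intro exI[of _ "p * q"]) simp
qed

lemma null_sets_poly_fun_zeros_real_line:
  assumes "poly_fun {()} (g :: (unit \<Rightarrow> real) \<Rightarrow> real)" "g (\<lambda>_. y0) \<noteq> 0"
  shows "{y. g (\<lambda>_. y) = 0} \<in> null_sets lborel"
proof -
  obtain p where p: "\<forall>y. g (\<lambda>_. y) = poly p y"
    using poly_fun_real_line_poly[OF assms(1)] by blast
  with assms(2) have "p \<noteq> 0" by auto
  then have "finite {y. poly p y = 0}" by (rule poly_roots_finite)
  then show ?thesis using p by (simp add: finite_imp_null_set_lborel)
qed

lemma poly_fun_Basis_coords:
  "poly_fun V (g :: (unit \<Rightarrow> 'b::euclidean_space) \<Rightarrow> real) \<Longrightarrow>
   poly_fun (Basis::'b set) (\<lambda>f::'b \<Rightarrow> real. g (\<lambda>_. \<Sum>b\<in>Basis. f b *\<^sub>R b))"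
proof (induction rule: poly_fun.induct)
  case (coord v b)
  have "poly_fun (Basis::'b set) (\<lambda>f::'b \<Rightarrow> real. f b \<bullet> 1)"
    using coord by (intro poly_fun.coord) auto
  moreover have "(\<Sum>b\<in>Basis. f b *\<^sub>R b) \<bullet> b = f b \<bullet> 1" for f :: "'b \<Rightarrow> real"
    using coord by (simp add: inner_sum_left inner_Basis if_distrib cong: if_cong)
  ultimately show ?case by simp
qed (auto intro: poly_fun.intros)

lemma null_sets_poly_fun_zeros_line:
  assumes "poly_fun {()} (g :: (unit \<Rightarrow> 'b::euclidean_space) \<Rightarrow> real)" "g (\<lambda>_. y0) \<noteq> 0"
  shows "{y. g (\<lambda>_. y) = 0} \<in> null_sets (lborel::'b measure)"
proof -
  let ?F = "\<lambda>f::'b \<Rightarrow> real. \<Sum>b\<in>Basis. f b *\<^sub>R b"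
  let ?x0 = "\<lambda>b. if b \<in> Basis then y0 \<bullet> b else undefined"
  have "{x \<in> space (PiM Basis (\<lambda>_. lborel)). g (\<lambda>_. ?F x) = 0} \<in> null_sets (PiM Basis (\<lambda>_. lborel))"
  proof (rule null_sets_poly_fun_zeros_from_line[OF null_sets_poly_fun_zeros_real_line])
    show "poly_fun Basis (\<lambda>x. g (\<lambda>_. ?F x))"
      using assms(1) by (rule poly_fun_Basis_coords)
    show "?x0 \<in> space (PiM Basis (\<lambda>_. lborel))"
      by (auto simp: space_PiM)
    have "?F ?x0 = y0"
      by (simp add: euclidean_representation cong: sum.cong)
    then show "g (\<lambda>_. ?F ?x0) \<noteq> 0"
      using assms(2) by simp
  qed simp_all
  moreover have "{y. g (\<lambda>_. y) = 0} \<in> sets borel"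
    using measurable_poly_fun_comp[OF assms(1), of "\<lambda>y _. y" borel] by measurable
  ultimately have "{y. g (\<lambda>_. y) = 0} \<in> null_sets (distr (PiM Basis (\<lambda>_. lborel)) borel ?F)"
    by (subst null_sets_distr_iff) (auto simp: vimage_def Int_def conj_commute)
  then show ?thesis by (simp add: lborel_eq[symmetric])
qed

lemma null_sets_poly_fun_zeros:
  fixes f :: "('v \<Rightarrow> 'b::euclidean_space) \<Rightarrow> real"
  assumes "finite V" "poly_fun V f" "x0 \<in> space (PiM V (\<lambda>_. lborel::'b measure))" "f x0 \<noteq> 0"
  shows "{x \<in> space (PiM V (\<lambda>_. lborel)). f x = 0} \<in> null_sets (PiM V (\<lambda>_. lborel))"
  using null_sets_poly_fun_zeros_from_line[OF null_sets_poly_fun_zeros_line assms] .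

definition cpoly_fun :: "'v set \<Rightarrow> (('v \<Rightarrow> 'b::euclidean_space) \<Rightarrow> complex) \<Rightarrow> bool" where
  "cpoly_fun V F \<longleftrightarrow> poly_fun V (\<lambda>x. Re (F x)) \<and> poly_fun V (\<lambda>x. Im (F x))"

lemma cpoly_fun_const [intro]: "cpoly_fun V (\<lambda>x. c)"
  by (simp add: cpoly_fun_def poly_fun.const)

lemma cpoly_fun_add [intro]: "cpoly_fun V F \<Longrightarrow> cpoly_fun V G \<Longrightarrow> cpoly_fun V (\<lambda>x. F x + G x)"
  by (simp add: cpoly_fun_def poly_fun.add)

lemma cpoly_fun_mult [intro]: "cpoly_fun V F \<Longrightarrow> cpoly_fun V G \<Longrightarrow> cpoly_fun V (\<lambda>x. F x * G x)"
  by (simp add: cpoly_fun_def poly_fun.add poly_fun.mult poly_fun_diff)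

lemma cpoly_fun_diff [intro]: "cpoly_fun V F \<Longrightarrow> cpoly_fun V G \<Longrightarrow> cpoly_fun V (\<lambda>x. F x - G x)"
  by (simp add: cpoly_fun_def poly_fun_diff)

lemma cpoly_fun_cnj [intro]:
  assumes "cpoly_fun V F"
  shows "cpoly_fun V (\<lambda>x. cnj (F x))"
proof -
  have "poly_fun V (\<lambda>x. 0 - Im (F x))"
    using assms by (intro poly_fun_diff poly_fun.const) (simp add: cpoly_fun_def)
  then show ?thesis
    using assms by (simp add: cpoly_fun_def)
qed

lemma cpoly_fun_divide_const [intro]: "cpoly_fun V F \<Longrightarrow> cpoly_fun V (\<lambda>x. F x / c)"
  using cpoly_fun_mult[OF _ cpoly_fun_const, of V F "1 / c"] by simp

lemma cpoly_fun_sum [intro]: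
  "(\<And>i. i \<in> I \<Longrightarrow> cpoly_fun V (F i)) \<Longrightarrow> cpoly_fun V (\<lambda>x. \<Sum>i\<in>I. F i x)"
  by (induction I rule: infinite_finite_induct) auto

lemma cpoly_fun_prod [intro]:
  "(\<And>i. i \<in> I \<Longrightarrow> cpoly_fun V (F i)) \<Longrightarrow> cpoly_fun V (\<lambda>x. \<Prod>i\<in>I. F i x)"
  by (induction I rule: infinite_finite_induct) auto

lemma cpoly_fun_cinner:
  "(\<And>a. a < n \<Longrightarrow> cpoly_fun V (\<lambda>x. p x a)) \<Longrightarrow> (\<And>a. a < n \<Longrightarrow> cpoly_fun V (\<lambda>x. q x a)) \<Longrightarrow>
    cpoly_fun V (\<lambda>x. cinner n (p x) (q x))"
  unfolding cinner_def by (intro cpoly_fun_sum cpoly_fun_mult cpoly_fun_cnj) auto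

lemma cpoly_fun_det:
  assumes "\<And>x. A x \<in> carrier_mat n n"
    and "\<And>a b. a < n \<Longrightarrow> b < n \<Longrightarrow> cpoly_fun V (\<lambda>x. A x $$ (a, b))"
  shows "cpoly_fun V (\<lambda>x. det (A x))"
proof -
  have "dim_row (A x) = n" "dim_col (A x) = n" for x
    using assms(1) by auto
  then show ?thesis
    unfolding det_def using assms(2)
    by (auto intro!: cpoly_fun_sum cpoly_fun_prod cpoly_fun_mult dest: permutes_in_image)
qed

lemma cpoly_fun_det_char_matrix:
  assumes "\<And>a b. a < n \<Longrightarrow> b < n \<Longrightarrow> cpoly_fun V (\<lambda>x. A x a b)" and "cpoly_fun V \<mu>"
  shows "cpoly_fun V (\<lambda>x. det (char_matrix (mat n n (\<lambda>(a, b). A x a b)) (\<mu> x)))"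
proof (rule cpoly_fun_det)
  fix a b assume "a < n" "b < n"
  then show "cpoly_fun V (\<lambda>x. char_matrix (mat n n (\<lambda>(a, b). A x a b)) (\<mu> x) $$ (a, b))"
    using assms by (cases "a = b") (simp_all add: char_matrix_def cpoly_fun_diff)
qed (simp add: char_matrix_def)

lemma cpoly_fun_coord_real: "v \<in> V \<Longrightarrow> cpoly_fun V (\<lambda>x::_ \<Rightarrow> real. complex_of_real (x v))"
  using poly_fun.coord[of v V "1::real"] by (simp add: cpoly_fun_def poly_fun.const Basis_real_def)

lemma cpoly_fun_coord_complex: "v \<in> V \<Longrightarrow> cpoly_fun V (\<lambda>x::_ \<Rightarrow> complex. x v)"
  using poly_fun.coord[of v V "1::complex"] poly_fun.coord[of v V \<i>] by (simp add: cpoly_fun_def Basis_complex_def)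

lemma null_sets_cpoly_fun_zeros:
  fixes F :: "('v \<Rightarrow> 'b::euclidean_space) \<Rightarrow> complex"
  assumes "finite V" "cpoly_fun V F" "x0 \<in> space (PiM V (\<lambda>_. lborel::'b measure))" "F x0 \<noteq> 0"
  shows "{x \<in> space (PiM V (\<lambda>_. lborel)). F x = 0} \<in> null_sets (PiM V (\<lambda>_. lborel))"
proof -
  let ?f = "\<lambda>x. Re (F x) * Re (F x) + Im (F x) * Im (F x)"
  have "poly_fun V ?f"
    using assms(2) by (auto simp: cpoly_fun_def intro: poly_fun.intros)
  moreover have "?f x0 \<noteq> 0"
    using assms(4) by (simp add: complex_eq_iff sum_squares_eq_zero_iff)
  ultimately have "{x \<in> space (PiM V (\<lambda>_. lborel)). ?f x = 0} \<in> null_sets (PiM V (\<lambda>_. lborel))"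
    by (intro null_sets_poly_fun_zeros[OF assms(1) _ assms(3)])
  moreover have "?f x = 0 \<longleftrightarrow> F x = 0" for x
    by (simp add: complex_eq_iff sum_squares_eq_zero_iff)
  ultimately show ?thesis
    by (simp only:)
qed

definition poly_negligible :: "'v set \<Rightarrow> (('v \<Rightarrow> 'b::euclidean_space) \<Rightarrow> bool) \<Rightarrow> bool" where
  "poly_negligible V Q \<longleftrightarrow> (\<exists>P. cpoly_fun V P \<and> (\<exists>x\<in>space (PiM V (\<lambda>_. lborel::'b measure)). P x \<noteq> 0)
     \<and> (\<forall>x. Q x \<longrightarrow> P x = 0))"

lemma poly_negligible_null:
  assumes "finite V" "poly_negligible V (Q :: ('v \<Rightarrow> 'b::euclidean_space) \<Rightarrow> bool)"
  shows "\<exists>N\<in>null_sets (PiM V (\<lambda>_. lborel::'b measure)). {x \<in> space (PiM V (\<lambda>_. lborel)). Q x} \<subseteq> N"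
proof -
  obtain P x0 where P: "cpoly_fun V P" "x0 \<in> space (PiM V (\<lambda>_. lborel::'b measure))" "P x0 \<noteq> 0"
    and Q: "\<forall>x. Q x \<longrightarrow> P x = 0"
    using assms(2) unfolding poly_negligible_def by blast
  have "{x \<in> space (PiM V (\<lambda>_. lborel)). P x = 0} \<in> null_sets (PiM V (\<lambda>_. lborel))"
    by (rule null_sets_cpoly_fun_zeros[OF assms(1) P])
  moreover have "{x \<in> space (PiM V (\<lambda>_. lborel::'b measure)). Q x} \<subseteq> {x \<in> space (PiM V (\<lambda>_. lborel)). P x = 0}"
    using Q by blast
  ultimately show ?thesis
    by (rule bexI[rotated])
qed

section \<open>Eigenvalues of real symmetric matrices\<close>

lemma is_eigenvalue_iff_eigenvalue:
  "is_eigenvalue n A \<mu> \<longleftrightarrow> eigenvalue (mat n n (\<lambda>(a, b). A a b)) \<mu>"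
proof -
  let ?M = "mat n n (\<lambda>(a, b). A a b)"
  have eq: "?M *\<^sub>v vec n w = \<mu> \<cdot>\<^sub>v vec n w \<longleftrightarrow> (\<forall>a<n. (\<Sum>b<n. A a b * w b) = \<mu> * w a)" for w
    by (auto simp: vec_eq_iff scalar_prod_def atLeast0LessThan)
  show ?thesis
  proof
    assume "is_eigenvalue n A \<mu>"
    then obtain w where "\<exists>a<n. w a \<noteq> 0" "\<forall>a<n. (\<Sum>b<n. A a b * w b) = \<mu> * w a"
      unfolding is_eigenvalue_def by blast
    then show "eigenvalue ?M \<mu>"
      unfolding eigenvalue_def eigenvector_def using eq[of w]
      by (intro exI[of _ "vec n w"]) (auto simp: vec_eq_iff)
  next
    assume "eigenvalue ?M \<mu>"
    then obtain v where v: "v \<in> carrier_vec n" "v \<noteq> 0\<^sub>v n" "?M *\<^sub>v v = \<mu> \<cdot>\<^sub>v v"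
      unfolding eigenvalue_def eigenvector_def by auto
    have "vec n (\<lambda>a. v $ a) = v"
      using v(1) by auto
    then have "\<forall>a<n. (\<Sum>b<n. A a b * v $ b) = \<mu> * v $ a"
      using eq[of "\<lambda>a. v $ a"] v(3) by argo
    moreover have "\<exists>a<n. v $ a \<noteq> 0"
      using v(1,2) by (auto simp: vec_eq_iff)
    ultimately show "is_eigenvalue n A \<mu>"
      unfolding is_eigenvalue_def by blast
  qed
qed

lemma is_eigenvalue_iff_det:
  "is_eigenvalue n A \<mu> \<longleftrightarrow> det (char_matrix (mat n n (\<lambda>(a, b). A a b)) \<mu>) = 0"
  by (simp add: is_eigenvalue_iff_eigenvalue eigenvalue_det[of _ n])

lemma sum_mult_symmetric_swap:
  fixes A :: "nat \<Rightarrow> nat \<Rightarrow> 'a::comm_semiring_0"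
  assumes "\<forall>a<n. \<forall>b<n. A a b = A b a"
  shows "(\<Sum>a<n. f a * (\<Sum>b<n. A a b * g b)) = (\<Sum>b<n. g b * (\<Sum>a<n. A b a * f a))"
proof -
  have "(\<Sum>a<n. f a * (\<Sum>b<n. A a b * g b)) = (\<Sum>a<n. \<Sum>b<n. f a * A a b * g b)"
    by (simp add: sum_distrib_left mult.assoc)
  also have "\<dots> = (\<Sum>b<n. \<Sum>a<n. f a * A a b * g b)"
    by (rule sum.swap)
  also have "\<dots> = (\<Sum>b<n. g b * (\<Sum>a<n. A b a * f a))"
    using assms by (auto simp: sum_distrib_left mult_ac intro!: sum.cong)
  finally show ?thesis .
qed

lemma symmetric_eigenvalue_real:
  assumes sym: "\<forall>a<n. \<forall>b<n. X a b = X b a"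
    and "is_eigenvalue n (\<lambda>a b. complex_of_real (X a b)) \<mu>"
  shows "Im \<mu> = 0"
proof -
  obtain v a0 where "a0 < n" "v a0 \<noteq> 0"
    and ev: "\<forall>a<n. (\<Sum>b<n. complex_of_real (X a b) * v b) = \<mu> * v a"
    using assms(2) unfolding is_eigenvalue_def by blast
  then have norm_pos: "(\<Sum>a<n. (cmod (v a))\<^sup>2) > 0"
    by (intro sum_pos2[of _ a0]) auto
  define S where "S = (\<Sum>a<n. cnj (v a) * (\<Sum>b<n. complex_of_real (X a b) * v b))"
  have "S = \<mu> * complex_of_real (\<Sum>a<n. (cmod (v a))\<^sup>2)"
    unfolding S_def using ev
    by (simp add: sum_distrib_left mult_ac flip: complex_norm_square)
  moreover have "cnj S = S"
    unfolding S_def using sum_mult_symmetric_swap[of n "\<lambda>a b. complex_of_real (X a b)" v "\<lambda>b. cnj (v b)"] sym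
    by simp
  then have "Im S = 0"
    by (metis cnj.simps(2) neg_equal_zero)
  ultimately show ?thesis
    using norm_pos by simp
qed

lemma is_eigenvalue_complexified:
  assumes "is_eigenvalue n (\<lambda>a b. complex_of_real (X a b)) (complex_of_real t)"
  shows "is_eigenvalue n X t"
proof -
  obtain v a0 where a0: "a0 < n" "v a0 \<noteq> 0"
    and ev: "\<forall>a<n. (\<Sum>b<n. complex_of_real (X a b) * v b) = complex_of_real t * v a"
    using assms unfolding is_eigenvalue_def by blast
  have re_im: "(\<Sum>b<n. X a b * Re (v b)) = t * Re (v a) \<and> (\<Sum>b<n. X a b * Im (v b)) = t * Im (v a)"
    if "a < n" for a
  proof -
    have "Re (\<Sum>b<n. complex_of_real (X a b) * v b) = Re (complex_of_real t * v a)"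
      "Im (\<Sum>b<n. complex_of_real (X a b) * v b) = Im (complex_of_real t * v a)"
      using ev that by simp_all
    then show ?thesis
      by (simp add: Re_sum Im_sum)
  qed
  show ?thesis
  proof (cases "Re (v a0) = 0")
    case True
    then have "Im (v a0) \<noteq> 0"
      using a0(2) by (simp add: complex_eq_iff)
    then show ?thesis
      unfolding is_eigenvalue_def using re_im a0(1) by (intro exI[of _ "\<lambda>b. Im (v b)"]) blast
  next
    case False
    then show ?thesis
      unfolding is_eigenvalue_def using re_im a0(1) by (intro exI[of _ "\<lambda>b. Re (v b)"]) blast
  qed
qed

definition orthonormal_rows :: "nat \<Rightarrow> (nat \<Rightarrow> nat \<Rightarrow> real) \<Rightarrow> bool" where
  "orthonormal_rows n E \<longleftrightarrow> (\<forall>k<n. \<forall>k'<n. (\<Sum>a<n. E k a * E k' a) = (if k = k' then 1 else 0))"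

lemma symmetric_eigvecs_orthogonal:
  fixes X :: "nat \<Rightarrow> nat \<Rightarrow> real"
  assumes sym: "\<forall>a<n. \<forall>b<n. X a b = X b a"
    and "\<forall>a<n. (\<Sum>b<n. X a b * e b) = s * e a" "\<forall>a<n. (\<Sum>b<n. X a b * e' b) = s' * e' a"
    and "s \<noteq> s'"
  shows "(\<Sum>a<n. e a * e' a) = 0"
proof -
  have "s * (\<Sum>a<n. e a * e' a) = (\<Sum>a<n. e' a * (\<Sum>b<n. X a b * e b))"
    using assms(2) by (simp add: sum_distrib_left mult_ac)
  also have "\<dots> = (\<Sum>b<n. e b * (\<Sum>a<n. X b a * e' a))"
    using sym by (rule sum_mult_symmetric_swap)
  also have "\<dots> = s' * (\<Sum>a<n. e a * e' a)"
    using assms(3) by (simp add: sum_distrib_left mult_ac)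
  finally show ?thesis
    using assms(4) by simp
qed

lemma symmetric_orthonormal_eigenbasis:
  fixes X :: "nat \<Rightarrow> nat \<Rightarrow> real"
  assumes sym: "\<forall>a<n. \<forall>b<n. X a b = X b a"
    and eig: "\<forall>k<n. is_eigenvalue n X (lam k)" and dist: "inj_on lam {..<n}"
  obtains E where "\<forall>k<n. \<forall>a<n. (\<Sum>b<n. X a b * E k b) = lam k * E k a" "orthonormal_rows n E"
proof -
  obtain e where e0: "\<And>k. k < n \<Longrightarrow> \<exists>a<n. e k a \<noteq> 0"
    and ee: "\<And>k. k < n \<Longrightarrow> \<forall>a<n. (\<Sum>b<n. X a b * e k b) = lam k * e k a"
    using eig unfolding is_eigenvalue_def by metis
  define \<nu> where "\<nu> k = sqrt (\<Sum>a<n. e k a * e k a)" for k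
  have \<nu>_pos: "\<nu> k > 0" if k: "k < n" for k
  proof -
    obtain a0 where "a0 < n" "e k a0 \<noteq> 0"
      using e0[OF k] by blast
    then have "(\<Sum>a<n. e k a * e k a) > 0"
      by (intro sum_pos2[of _ a0]) (auto simp flip: power2_eq_square)
    then show ?thesis
      unfolding \<nu>_def by simp
  qed
  define E where "E k a = e k a / \<nu> k" for k a
  have "\<forall>k<n. \<forall>a<n. (\<Sum>b<n. X a b * E k b) = lam k * E k a"
    using ee unfolding E_def by (simp add: sum_divide_distrib[symmetric])
  moreover have "(\<Sum>a<n. E k a * E k' a) = (if k = k' then 1 else 0)" if "k < n" "k' < n" for k k'
  proof -
    have "(\<Sum>a<n. E k a * E k' a) = (\<Sum>a<n. e k a * e k' a) / (\<nu> k * \<nu> k')"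
      unfolding E_def by (simp add: sum_divide_distrib)
    moreover have "(\<Sum>a<n. e k a * e k a) = \<nu> k * \<nu> k"
      unfolding \<nu>_def by (simp add: sum_nonneg flip: power2_eq_square)
    moreover have "(\<Sum>a<n. e k a * e k' a) = 0" if "k \<noteq> k'"
      using symmetric_eigvecs_orthogonal[OF sym ee[OF \<open>k < n\<close>] ee[OF \<open>k' < n\<close>]] dist that
        \<open>k < n\<close> \<open>k' < n\<close> by (auto dest: inj_onD)
    ultimately show ?thesis
      using \<nu>_pos[OF \<open>k < n\<close>] by auto
  qed
  ultimately show ?thesis
    using that unfolding orthonormal_rows_def by blast
qed

lemma orthonormal_rows_coeffs_zero:
  assumes "orthonormal_rows n E"
    and "\<forall>k<n. (\<Sum>a<n. complex_of_real (E k a) * v a) = 0" and "a < n"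
  shows "v a = 0"
proof -
  let ?E = "mat n n (\<lambda>(k, a). complex_of_real (E k a))"
  have "?E * transpose_mat ?E = 1\<^sub>m n"
    using assms(1)
    by (intro eq_matI)
      (auto simp: orthonormal_rows_def scalar_prod_def atLeast0LessThan simp flip: of_real_mult of_real_sum)
  then have inv: "transpose_mat ?E * ?E = 1\<^sub>m n"
    using mat_mult_left_right_inverse[of ?E n "transpose_mat ?E"] by auto
  have coeffs: "?E *\<^sub>v vec n v = 0\<^sub>v n"
    using assms(2) by (auto simp: scalar_prod_def atLeast0LessThan)
  have "vec n v = (transpose_mat ?E * ?E) *\<^sub>v vec n v"
    by (simp add: inv)
  also have "\<dots> = transpose_mat ?E *\<^sub>v (?E *\<^sub>v vec n v)"
    by (rule assoc_mult_mat_vec) auto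
  also have "\<dots> = 0\<^sub>v n"
    unfolding coeffs by (intro eq_vecI) (auto simp: scalar_prod_def)
  finally have "vec n v $ a = 0\<^sub>v n $ a"
    by simp
  then show ?thesis
    using assms(3) by simp
qed

lemma perturb_of_real:
  "perturb r X \<theta> (\<lambda>i a. complex_of_real (U i a)) a b
     = complex_of_real (X a b + (\<Sum>i<r. \<theta> i * U i a * U i b))"
  by (simp add: perturb_def)

lemma perturb_eigvec:
  fixes E :: "nat \<Rightarrow> nat \<Rightarrow> real" and \<kappa> :: "nat \<Rightarrow> nat"
  assumes Eeig: "\<forall>k<n. \<forall>a<n. (\<Sum>b<n. X a b * E k b) = lam k * E k a"
    and orth: "orthonormal_rows n E" and \<kappa>: "\<forall>i<r. \<kappa> i < n"
    and "k < n" "a < n"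
  shows "(\<Sum>b<n. perturb r X \<theta> (\<lambda>i a. complex_of_real (E (\<kappa> i) a)) a b * complex_of_real (E k b))
       = complex_of_real ((lam k + (\<Sum>i | i < r \<and> \<kappa> i = k. \<theta> i)) * E k a)"
proof -
  have "(\<Sum>b<n. (X a b + (\<Sum>i<r. \<theta> i * E (\<kappa> i) a * E (\<kappa> i) b)) * E k b)
      = (\<Sum>b<n. X a b * E k b) + (\<Sum>i<r. \<theta> i * E (\<kappa> i) a * (\<Sum>b<n. E (\<kappa> i) b * E k b))"
    by (simp add: algebra_simps sum.distrib sum_distrib_left sum_distrib_right sum.swap[of _ "{..<n}"])
  also have "\<dots> = lam k * E k a + (\<Sum>i<r. if \<kappa> i = k then \<theta> i * E k a else 0)"
    using assms orth unfolding orthonormal_rows_def by (auto intro!: sum.cong)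
  also have "\<dots> = (lam k + (\<Sum>i | i < r \<and> \<kappa> i = k. \<theta> i)) * E k a"
    by (simp add: sum.If_cases sum_distrib_right distrib_right lessThan_def Collect_conj_eq Int_commute)
  finally show ?thesis
    by (simp only: perturb_of_real of_real_mult[symmetric] of_real_sum[symmetric])
qed

lemma perturb_eigvec_coeff:
  fixes E :: "nat \<Rightarrow> nat \<Rightarrow> real" and \<kappa> :: "nat \<Rightarrow> nat"
  assumes sym: "\<forall>a<n. \<forall>b<n. X a b = X b a"
    and Eeig: "\<forall>k<n. \<forall>a<n. (\<Sum>b<n. X a b * E k b) = lam k * E k a"
    and orth: "orthonormal_rows n E" and \<kappa>: "\<forall>i<r. \<kappa> i < n"
    and ev: "\<forall>a<n. (\<Sum>b<n. perturb r X \<theta> (\<lambda>i a. complex_of_real (E (\<kappa> i) a)) a b * v b) = \<mu> * v a"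
    and k: "k < n"
  shows "(complex_of_real (lam k + (\<Sum>i | i < r \<and> \<kappa> i = k. \<theta> i)) - \<mu>)
      * (\<Sum>a<n. complex_of_real (E k a) * v a) = 0"
proof -
  let ?P = "perturb r X \<theta> (\<lambda>i a. complex_of_real (E (\<kappa> i) a))"
  let ?s = "lam k + (\<Sum>i | i < r \<and> \<kappa> i = k. \<theta> i)"
  have "\<forall>a<n. \<forall>b<n. ?P a b = ?P b a"
    using sym by (simp add: perturb_of_real mult_ac)
  then have "(\<Sum>a<n. complex_of_real (E k a) * (\<Sum>b<n. ?P a b * v b))
      = (\<Sum>b<n. v b * (\<Sum>a<n. ?P b a * complex_of_real (E k a)))"
    by (rule sum_mult_symmetric_swap)
  also have "\<dots> = complex_of_real ?s * (\<Sum>a<n. complex_of_real (E k a) * v a)"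
    using perturb_eigvec[OF Eeig orth \<kappa> k] by (simp add: sum_distrib_left sum_distrib_right mult_ac)
  moreover have "(\<Sum>a<n. complex_of_real (E k a) * (\<Sum>b<n. ?P a b * v b))
      = \<mu> * (\<Sum>a<n. complex_of_real (E k a) * v a)"
    using ev by (auto simp: sum_distrib_left mult_ac intro!: sum.cong)
  ultimately show ?thesis
    by (simp add: left_diff_distrib) (metis mult.commute)
qed

lemma perturb_eigvecs_not_eigenvalue:
  fixes E :: "nat \<Rightarrow> nat \<Rightarrow> real" and \<kappa> :: "nat \<Rightarrow> nat"
  assumes sym: "\<forall>a<n. \<forall>b<n. X a b = X b a"
    and Eeig: "\<forall>k<n. \<forall>a<n. (\<Sum>b<n. X a b * E k b) = lam k * E k a"
    and orth: "orthonormal_rows n E" and \<kappa>: "\<forall>i<r. \<kappa> i < n"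
    and shifted: "\<forall>k<n. lam k + (\<Sum>i | i < r \<and> \<kappa> i = k. \<theta> i) \<noteq> \<mu>"
  shows "\<not> is_eigenvalue n (perturb r X \<theta> (\<lambda>i a. complex_of_real (E (\<kappa> i) a))) (complex_of_real \<mu>)"
proof
  assume "is_eigenvalue n (perturb r X \<theta> (\<lambda>i a. complex_of_real (E (\<kappa> i) a))) (complex_of_real \<mu>)"
  then obtain v where v0: "\<exists>a<n. v a \<noteq> 0"
    and ev: "\<forall>a<n. (\<Sum>b<n. perturb r X \<theta> (\<lambda>i a. complex_of_real (E (\<kappa> i) a)) a b * v b)
      = complex_of_real \<mu> * v a"
    unfolding is_eigenvalue_def by blast
  have "(\<Sum>a<n. complex_of_real (E k a) * v a) = 0" if "k < n" for k
    using perturb_eigvec_coeff[OF sym Eeig orth \<kappa> ev that] shifted that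
    by (auto simp del: of_real_add of_real_sum)
  then have "v a = 0" if "a < n" for a
    using orthonormal_rows_coeffs_zero[OF orth _ that] by blast
  with v0 show False
    by blast
qed

section \<open>Gram--Schmidt with cleared denominators\<close>

definition orthonormal_family :: "nat \<Rightarrow> nat \<Rightarrow> (nat \<Rightarrow> nat \<Rightarrow> complex) \<Rightarrow> bool" where
  "orthonormal_family n r c \<longleftrightarrow> (\<forall>j<r. \<forall>k<r. cinner n (c j) (c k) = (if j = k then 1 else 0))"

text \<open>The \<open>k\<close>-th vector is \<open>(\<Prod>j<k. \<parallel>p\<^sub>j\<parallel>\<^sup>2) (c\<^sub>k - \<Sum>j<k. \<langle>p\<^sub>j, c\<^sub>k\<rangle> p\<^sub>j / \<parallel>p\<^sub>j\<parallel>\<^sup>2)\<close>: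
  a multiple of the unnormalised Gram--Schmidt vector that is polynomial in the entries of \<open>c\<close>.\<close>

primrec gs_cleared_list :: "nat \<Rightarrow> (nat \<Rightarrow> nat \<Rightarrow> complex) \<Rightarrow> nat \<Rightarrow> (nat \<Rightarrow> complex) list" where
  "gs_cleared_list n c 0 = []"
| "gs_cleared_list n c (Suc k) =
     (let ps = gs_cleared_list n c k
      in ps @ [\<lambda>a. (\<Prod>j<k. cinner n (ps ! j) (ps ! j)) * c k a
        - (\<Sum>j<k. cinner n (ps ! j) (c k) * (\<Prod>i\<in>{..<k} - {j}. cinner n (ps ! i) (ps ! i)) * (ps ! j) a)])"

definition gs_cleared :: "nat \<Rightarrow> (nat \<Rightarrow> nat \<Rightarrow> complex) \<Rightarrow> nat \<Rightarrow> nat \<Rightarrow> complex" where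
  "gs_cleared n c j = gs_cleared_list n c (Suc j) ! j"

definition gs_vec :: "nat \<Rightarrow> (nat \<Rightarrow> nat \<Rightarrow> complex) \<Rightarrow> nat \<Rightarrow> nat \<Rightarrow> complex" where
  "gs_vec n c j = gs_list n c (Suc j) ! j"

lemma length_gs_cleared_list [simp]: "length (gs_cleared_list n c k) = k"
  by (induction k) (simp_all add: Let_def)

lemma length_gs_list [simp]: "length (gs_list n c k) = k"
  by (induction k) (simp_all add: Let_def)

lemma gs_cleared_list_nth: "j < k \<Longrightarrow> gs_cleared_list n c k ! j = gs_cleared n c j"
proof (induction k)
  case (Suc k)
  then show ?case
    by (cases "j = k") (auto simp: gs_cleared_def Let_def nth_append)
qed simp

lemma gs_list_nth: "j < k \<Longrightarrow> gs_list n c k ! j = gs_vec n c j"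
proof (induction k)
  case (Suc k)
  then show ?case
    by (cases "j = k") (auto simp: gs_vec_def Let_def nth_append)
qed simp

lemma gram_schmidt_eq_gs_vec: "i < r \<Longrightarrow> gram_schmidt n r c i = gs_vec n c i"
  by (simp add: gram_schmidt_def gs_list_nth)

lemma gs_cleared_rec:
  "gs_cleared n c k = (\<lambda>a. (\<Prod>j<k. cinner n (gs_cleared n c j) (gs_cleared n c j)) * c k a
     - (\<Sum>j<k. cinner n (gs_cleared n c j) (c k)
          * (\<Prod>i\<in>{..<k} - {j}. cinner n (gs_cleared n c i) (gs_cleared n c i)) * gs_cleared n c j a))"
  by (subst gs_cleared_def) (simp add: Let_def nth_append gs_cleared_list_nth cong: sum.cong_simp prod.cong_simp)

lemma gs_vec_rec:
  "gs_vec n c k = (let w = (\<lambda>a. c k a - (\<Sum>j<k. cinner n (gs_vec n c j) (c k) * gs_vec n c j a))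
     in (\<lambda>a. w a / complex_of_real (cnorm n w)))"
  by (subst gs_vec_def) (simp add: Let_def nth_append gs_list_nth cong: sum.cong_simp)

lemma cinner_self_eq_cnorm: "cinner n p p = complex_of_real ((cnorm n p)\<^sup>2)"
proof -
  have "cinner n p p = (\<Sum>k<n. complex_of_real ((cmod (p k))\<^sup>2))"
    unfolding cinner_def by (intro sum.cong refl) (metis complex_norm_square mult.commute)
  then show ?thesis
    unfolding cnorm_def by (simp add: sum_nonneg)
qed

lemma cnorm_scale: "cnorm n (\<lambda>a. z * w a) = cmod z * cnorm n w"
proof -
  have "(\<Sum>k<n. (cmod (z * w k))\<^sup>2) = (cmod z)\<^sup>2 * (\<Sum>k<n. (cmod (w k))\<^sup>2)"
    by (simp add: norm_mult power_mult_distrib sum_distrib_left)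
  then show ?thesis
    unfolding cnorm_def by (simp add: real_sqrt_mult)
qed

lemma cinner_scale_left: "cinner n (\<lambda>a. z * p a) q = cnj z * cinner n p q"
  unfolding cinner_def by (simp add: sum_distrib_left mult.assoc)

lemma cinner_scale_right: "cinner n p (\<lambda>a. z * q a) = z * cinner n p q"
  unfolding cinner_def by (simp add: sum_distrib_left algebra_simps)

lemma gs_vec_eq_gs_cleared:
  assumes "\<forall>i\<le>j. cnorm n (gs_cleared n c i) \<noteq> 0"
  shows "gs_vec n c j = (\<lambda>a. gs_cleared n c j a / complex_of_real (cnorm n (gs_cleared n c j)))"
  using assms
proof (induction j rule: less_induct)
  case (less j)
  define N where "N i = cnorm n (gs_cleared n c i)" for i
  define Q where "Q = (\<Prod>i<j. N i ^ 2)"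
  define w where "w = (\<lambda>a. c j a - (\<Sum>i<j. cinner n (gs_vec n c i) (c j) * gs_vec n c i a))"
  have N_nz: "N i \<noteq> 0" if "i \<le> j" for i
    using less.prems that unfolding N_def by auto
  have Q_pos: "Q > 0"
    unfolding Q_def using N_nz by (intro prod_pos) auto
  have gs_vec_i: "gs_vec n c i = (\<lambda>a. gs_cleared n c i a / complex_of_real (N i))" if "i < j" for i
    using less.IH[OF that] less.prems that unfolding N_def by auto
  have w_eq: "w = (\<lambda>a. c j a - (\<Sum>i<j. cinner n (gs_cleared n c i) (c j) * gs_cleared n c i a
      / complex_of_real (N i ^ 2)))"
    unfolding w_def
    by (intro ext arg_cong2[where f="(-)"] sum.cong refl)
      (simp add: gs_vec_i cinner_def power2_eq_square flip: sum_divide_distrib)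
  have cleared: "gs_cleared n c j = (\<lambda>a. complex_of_real Q * w a)"
  proof
    fix a
    have "(\<Prod>l\<in>{..<j} - {i}. cinner n (gs_cleared n c l) (gs_cleared n c l))
        = complex_of_real Q / complex_of_real (N i ^ 2)" if "i < j" for i
      using that N_nz[of i] by (simp add: prod_diff1 cinner_self_eq_cnorm N_def Q_def)
    then show "gs_cleared n c j a = complex_of_real Q * w a"
      by (subst gs_cleared_rec)
        (simp add: w_eq cinner_self_eq_cnorm N_def Q_def right_diff_distrib sum_distrib_left algebra_simps)
  qed
  have "cnorm n (gs_cleared n c j) = Q * cnorm n w"
    unfolding cleared cnorm_scale using Q_pos by simp
  then have "(\<lambda>a. gs_cleared n c j a / complex_of_real (cnorm n (gs_cleared n c j)))
      = (\<lambda>a. w a / complex_of_real (cnorm n w))"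
    using Q_pos unfolding cleared by (auto simp: field_simps)
  also have "\<dots> = gs_vec n c j"
    by (simp add: gs_vec_rec[of n c j] w_def Let_def)
  finally show ?case
    by simp
qed

lemma gs_cleared_orthonormal:
  assumes on: "orthonormal_family n r c"
  shows "k < r \<Longrightarrow> gs_cleared n c k = (\<lambda>a. (\<Prod>j<k. cinner n (gs_cleared n c j) (gs_cleared n c j)) * c k a)
    \<and> cinner n (gs_cleared n c k) (gs_cleared n c k) \<noteq> 0"
proof (induction k rule: less_induct)
  case (less k)
  define P where "P = (\<Prod>j<k. cinner n (gs_cleared n c j) (gs_cleared n c j))"
  have IH: "gs_cleared n c j = (\<lambda>a. (\<Prod>i<j. cinner n (gs_cleared n c i) (gs_cleared n c i)) * c j a)"
    "cinner n (gs_cleared n c j) (gs_cleared n c j) \<noteq> 0" if "j < k" for j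
    using less.IH[OF that] less.prems that by auto
  have "P \<noteq> 0"
    unfolding P_def using IH(2) by simp
  have "cinner n (gs_cleared n c j) (c k) = 0" if "j < k" for j
    using less.prems that on unfolding IH(1)[OF that]
    by (simp add: cinner_scale_left orthonormal_family_def)
  then have cleared: "gs_cleared n c k = (\<lambda>a. P * c k a)"
    by (subst gs_cleared_rec) (simp add: P_def)
  then have "cinner n (gs_cleared n c k) (gs_cleared n c k) = cnj P * P"
    using on less.prems by (simp add: cinner_scale_left cinner_scale_right orthonormal_family_def)
  with \<open>P \<noteq> 0\<close> cleared show ?case
    unfolding P_def by simp
qed

lemma gs_vec_orthonormal:
  assumes on: "orthonormal_family n r c"
  shows "k < r \<Longrightarrow> gs_vec n c k = c k"
proof (induction k rule: less_induct)
  case (less k)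
  have "cinner n (c k) (c k) = 1"
    using on less.prems by (simp add: orthonormal_family_def)
  then have "(cnorm n (c k))\<^sup>2 = 1"
    by (metis cinner_self_eq_cnorm of_real_eq_1_iff)
  then have norm: "cnorm n (c k) = 1"
    unfolding cnorm_def by (simp add: sum_nonneg)
  have "cinner n (gs_vec n c j) (c k) = 0" if "j < k" for j
    using less that on by (simp add: orthonormal_family_def)
  then have "(\<lambda>a. c k a - (\<Sum>j<k. cinner n (gs_vec n c j) (c k) * gs_vec n c j a)) = c k"
    by simp
  with norm show ?case
    by (simp add: gs_vec_rec[of n c k] Let_def)
qed

lemma cpoly_fun_gs_cleared:
  assumes "\<And>j a. j < r \<Longrightarrow> a < n \<Longrightarrow> cpoly_fun V (\<lambda>x. c x j a)"
  shows "k < r \<Longrightarrow> a < n \<Longrightarrow> cpoly_fun V (\<lambda>x. gs_cleared n (c x) k a)"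
proof (induction k arbitrary: a rule: less_induct)
  case (less k)
  have IH: "\<And>j a. j < k \<Longrightarrow> a < n \<Longrightarrow> cpoly_fun V (\<lambda>x. gs_cleared n (c x) j a)"
    using less by auto
  show ?case
    unfolding gs_cleared_rec[of n _ k] using less.prems IH assms
    by (intro cpoly_fun_diff cpoly_fun_mult cpoly_fun_sum cpoly_fun_prod cpoly_fun_cinner) auto
qed

definition gs_denom :: "nat \<Rightarrow> nat \<Rightarrow> (nat \<Rightarrow> nat \<Rightarrow> complex) \<Rightarrow> complex" where
  "gs_denom n r c = (\<Prod>i<r. cinner n (gs_cleared n c i) (gs_cleared n c i))"

definition perturb_cleared :: "nat \<Rightarrow> nat \<Rightarrow> (nat \<Rightarrow> nat \<Rightarrow> real) \<Rightarrow> (nat \<Rightarrow> real)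
    \<Rightarrow> (nat \<Rightarrow> nat \<Rightarrow> complex) \<Rightarrow> nat \<Rightarrow> nat \<Rightarrow> complex" where
  "perturb_cleared n r X \<theta> c a b = gs_denom n r c * complex_of_real (X a b)
     + (\<Sum>i<r. complex_of_real (\<theta> i) * (\<Prod>l\<in>{..<r} - {i}. cinner n (gs_cleared n c l) (gs_cleared n c l))
          * gs_cleared n c i a * cnj (gs_cleared n c i b))"

lemma perturb_cleared_eq:
  assumes "gs_denom n r c \<noteq> 0"
  shows "perturb_cleared n r X \<theta> c a b = gs_denom n r c * perturb r X \<theta> (gram_schmidt n r c) a b"
proof -
  have norm_nz: "cnorm n (gs_cleared n c i) \<noteq> 0" if "i < r" for i
    using assms that unfolding gs_denom_def by (auto simp: cinner_self_eq_cnorm)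
  have summand: "complex_of_real (\<theta> i) * (\<Prod>l\<in>{..<r} - {i}. cinner n (gs_cleared n c l) (gs_cleared n c l))
      * gs_cleared n c i a * cnj (gs_cleared n c i b)
    = gs_denom n r c * (complex_of_real (\<theta> i) * gram_schmidt n r c i a * cnj (gram_schmidt n r c i b))"
    if "i < r" for i
  proof -
    have "gram_schmidt n r c i = (\<lambda>a. gs_cleared n c i a / complex_of_real (cnorm n (gs_cleared n c i)))"
      using that norm_nz by (simp add: gram_schmidt_eq_gs_vec gs_vec_eq_gs_cleared)
    moreover have "gs_denom n r c = cinner n (gs_cleared n c i) (gs_cleared n c i)
        * (\<Prod>l\<in>{..<r} - {i}. cinner n (gs_cleared n c l) (gs_cleared n c l))"
      unfolding gs_denom_def using that by (subst prod.remove[of _ i]) auto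
    ultimately show ?thesis
      using norm_nz[OF that] by (simp add: cinner_self_eq_cnorm field_simps power2_eq_square)
  qed
  have "(\<Sum>i<r. complex_of_real (\<theta> i) * (\<Prod>l\<in>{..<r} - {i}. cinner n (gs_cleared n c l) (gs_cleared n c l))
      * gs_cleared n c i a * cnj (gs_cleared n c i b))
    = gs_denom n r c * (\<Sum>i<r. complex_of_real (\<theta> i) * gram_schmidt n r c i a * cnj (gram_schmidt n r c i b))"
    unfolding sum_distrib_left by (rule sum.cong) (simp_all add: summand)
  then show ?thesis
    unfolding perturb_cleared_def perturb_def by (simp add: distrib_left)
qed

lemma det_char_perturb_cleared:
  assumes "gs_denom n r c \<noteq> 0"
  shows "det (char_matrix (mat n n (\<lambda>(a, b). perturb_cleared n r X \<theta> c a b)) (gs_denom n r c * \<mu>))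
    = gs_denom n r c ^ n * det (char_matrix (mat n n (\<lambda>(a, b). perturb r X \<theta> (gram_schmidt n r c) a b)) \<mu>)"
proof -
  have "char_matrix (mat n n (\<lambda>(a, b). perturb_cleared n r X \<theta> c a b)) (gs_denom n r c * \<mu>)
      = gs_denom n r c \<cdot>\<^sub>m char_matrix (mat n n (\<lambda>(a, b). perturb r X \<theta> (gram_schmidt n r c) a b)) \<mu>"
    by (intro eq_matI) (auto simp: char_matrix_def perturb_cleared_eq[OF assms] algebra_simps)
  then show ?thesis
    by (simp add: det_smult char_matrix_def)
qed

section \<open>Perturbations avoiding an eigenvalue of X\<close>

lemma shifted_eigenvalue_ne:
  fixes lam \<theta> :: "nat \<Rightarrow> real"
  assumes inj: "inj_on \<kappa> {..<r}" and dist: "inj_on lam {..<n}" and "k < n" "j < n"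
    and theta: "\<forall>i<r. \<theta> i \<noteq> 0" and hit: "j \<in> \<kappa> ` {..<r}"
    and shift: "\<And>i. i < r \<Longrightarrow> \<kappa> i \<noteq> j \<Longrightarrow> lam (\<kappa> i) + \<theta> i \<noteq> lam j"
  shows "lam k + (\<Sum>i | i < r \<and> \<kappa> i = k. \<theta> i) \<noteq> lam j"
proof (cases "k \<in> \<kappa> ` {..<r}")
  case True
  then obtain i where i: "i < r" "k = \<kappa> i"
    by auto
  then have "{i'. i' < r \<and> \<kappa> i' = k} = {i}"
    using inj by (auto dest: inj_onD)
  then show ?thesis
    using i shift theta by (cases "\<kappa> i = j") auto
next
  case False
  then have "{i. i < r \<and> \<kappa> i = k} = {}"
    by auto
  then have "(\<Sum>i | i < r \<and> \<kappa> i = k. \<theta> i) = 0"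
    by (simp only: sum.empty)
  moreover have "k \<noteq> j"
    using False hit by auto
  ultimately show ?thesis
    using dist assms(3,4) by (auto dest: inj_onD)
qed

lemma is_eigenvalue_perturb_cong:
  assumes "\<And>i a. i < r \<Longrightarrow> a < n \<Longrightarrow> u i a = u' i a"
  shows "is_eigenvalue n (perturb r X \<theta> u) \<mu> \<longleftrightarrow> is_eigenvalue n (perturb r X \<theta> u') \<mu>"
proof -
  have "mat n n (\<lambda>(a, b). perturb r X \<theta> u a b) = mat n n (\<lambda>(a, b). perturb r X \<theta> u' a b)"
    using assms by (intro eq_matI) (auto simp: perturb_def intro!: sum.cong)
  then show ?thesis
    by (simp add: is_eigenvalue_iff_eigenvalue)
qed

lemma orthonormal_family_of_rows:
  assumes orth: "orthonormal_rows n E" and "\<forall>i<r. \<kappa> i < n" "inj_on \<kappa> {..<r}"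
    and c: "\<And>i a. i < r \<Longrightarrow> a < n \<Longrightarrow> c i a = complex_of_real (E (\<kappa> i) a)"
  shows "orthonormal_family n r c"
  unfolding orthonormal_family_def
proof (intro allI impI)
  fix i k assume "i < r" "k < r"
  then have "cinner n (c i) (c k) = complex_of_real (\<Sum>a<n. E (\<kappa> i) a * E (\<kappa> k) a)"
    unfolding cinner_def of_real_sum by (intro sum.cong) (auto simp: c)
  with \<open>i < r\<close> \<open>k < r\<close> show "cinner n (c i) (c k) = (if i = k then 1 else 0)"
    using orth assms(2,3) unfolding orthonormal_rows_def by (auto dest: inj_onD)
qed

locale simple_spectrum_perturbation =
  fixes n r :: nat and X :: "nat \<Rightarrow> nat \<Rightarrow> real" and lam \<theta> :: "nat \<Rightarrow> real"
    and idx :: "nat \<Rightarrow> nat"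
  assumes r_pos: "1 \<le> r" and r_less: "r < n"
    and sym: "\<forall>a<n. \<forall>b<n. X a b = X b a"
    and eig: "{\<mu>. is_eigenvalue n X \<mu>} = lam ` {..<n}"
    and dist: "inj_on lam {..<n}"
    and theta: "\<forall>i<r. \<theta> i \<noteq> 0"
    and idx_range: "\<forall>k<r - 1. idx k < n"
    and idx_inj: "inj_on idx {..<r - 1}"
    and H: "(\<lambda>k. lam (idx k) + \<theta> k) ` {..<r - 1} \<inter> lam ` {..<n} = {}"
begin

lemma complexified_eigenvalue:
  assumes "is_eigenvalue n (\<lambda>a b. complex_of_real (X a b)) \<mu>"
  obtains k where "k < n" "\<mu> = complex_of_real (lam k)"
proof -
  have real: "\<mu> = complex_of_real (Re \<mu>)"
    using symmetric_eigenvalue_real[OF sym assms] by (simp add: complex_eq_iff)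
  then have "is_eigenvalue n X (Re \<mu>)"
    using assms by (metis is_eigenvalue_complexified)
  then have "Re \<mu> \<in> lam ` {..<n}"
    using eig by blast
  with real that show ?thesis
    by auto
qed

text \<open>The index \<open>k\<close> receives the last column: if \<open>j\<close> is not hit by \<open>idx\<close> it must be \<open>j\<close>
  itself, otherwise one of the at least two free eigenvalues is not shifted onto \<open>lam j\<close>.\<close>

lemma exists_extra_index:
  assumes "j < n"
  obtains k where "k < n" "k \<notin> idx ` {..<r - 1}" "j \<in> insert k (idx ` {..<r - 1})"
    "k \<noteq> j \<Longrightarrow> lam k + \<theta> (r - 1) \<noteq> lam j"
proof (cases "j \<in> idx ` {..<r - 1}")
  case False
  with assms that show ?thesis by blast
next
  case True
  define S where "S = {..<n} - idx ` {..<r - 1}"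
  have "card S = n - (r - 1)"
    unfolding S_def using idx_range idx_inj by (subst card_Diff_subset) (auto simp: card_image)
  then have "\<not> card S \<le> Suc 0"
    using r_pos r_less by simp
  then obtain k1 k2 where k12: "k1 \<in> S" "k2 \<in> S" "k1 \<noteq> k2"
    using card_le_Suc0_iff_eq[of S] unfolding S_def by blast
  then have "lam k1 \<noteq> lam k2"
    using dist unfolding S_def by (auto dest: inj_onD)
  then have "lam k1 + \<theta> (r - 1) \<noteq> lam j \<or> lam k2 + \<theta> (r - 1) \<noteq> lam j"
    by auto
  then obtain k where "k \<in> S" "lam k + \<theta> (r - 1) \<noteq> lam j"
    using k12 by blast
  with True that show ?thesis
    unfolding S_def by blast
qed

lemma exists_shifting_index_map:
  assumes j: "j < n"
  obtains \<kappa> where "\<forall>i<r. \<kappa> i < n" "inj_on \<kappa> {..<r}"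
    "\<forall>k<n. lam k + (\<Sum>i | i < r \<and> \<kappa> i = k. \<theta> i) \<noteq> lam j"
proof -
  obtain k where k: "k < n" "k \<notin> idx ` {..<r - 1}" "j \<in> insert k (idx ` {..<r - 1})"
    "k \<noteq> j \<Longrightarrow> lam k + \<theta> (r - 1) \<noteq> lam j"
    using exists_extra_index[OF j] by blast
  define \<kappa> where "\<kappa> i = (if i < r - 1 then idx i else k)" for i
  have range: "\<forall>i<r. \<kappa> i < n"
    using idx_range k(1) by (simp add: \<kappa>_def)
  have inj: "inj_on \<kappa> {..<r}"
  proof (rule inj_onI)
    fix i i' assume "i \<in> {..<r}" "i' \<in> {..<r}" "\<kappa> i = \<kappa> i'"
    then show "i = i'"
      using idx_inj k(2) by (cases "i < r - 1"; cases "i' < r - 1") (auto simp: \<kappa>_def dest: inj_onD)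
  qed
  have hit: "j \<in> \<kappa> ` {..<r}"
  proof (cases "j = k")
    case True
    then show ?thesis
      using r_pos by (intro image_eqI[of _ _ "r - 1"]) (auto simp: \<kappa>_def)
  next
    case False
    then obtain i where "i < r - 1" "j = idx i"
      using k(3) by auto
    then show ?thesis
      by (intro image_eqI[of _ _ i]) (auto simp: \<kappa>_def)
  qed
  have shift: "lam (\<kappa> i) + \<theta> i \<noteq> lam j" if "i < r" "\<kappa> i \<noteq> j" for i
  proof (cases "i < r - 1")
    case True
    then show ?thesis
      using H j by (auto simp: \<kappa>_def)
  next
    case False
    with that have "i = r - 1"
      by simp
    with False that k(4) show ?thesis
      by (simp add: \<kappa>_def)
  qed
  show ?thesis
    using that[OF range inj] shifted_eigenvalue_ne[OF inj dist _ j theta hit shift] by blast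
qed

lemma exists_eigvecs_perturb_not_eigenvalue:
  assumes "j < n"
  obtains E \<kappa> where "orthonormal_rows n E" "\<forall>i<r. \<kappa> i < n" "inj_on \<kappa> {..<r}"
    "\<not> is_eigenvalue n (perturb r X \<theta> (\<lambda>i a. complex_of_real (E (\<kappa> i) a))) (complex_of_real (lam j))"
proof -
  have "\<forall>k<n. is_eigenvalue n X (lam k)"
    using eig by blast
  then obtain E where E: "\<forall>k<n. \<forall>a<n. (\<Sum>b<n. X a b * E k b) = lam k * E k a" "orthonormal_rows n E"
    using symmetric_orthonormal_eigenbasis[OF sym _ dist] by blast
  obtain \<kappa> where \<kappa>: "\<forall>i<r. \<kappa> i < n" "inj_on \<kappa> {..<r}" "\<forall>k<n. lam k + (\<Sum>i | i < r \<and> \<kappa> i = k. \<theta> i) \<noteq> lam j"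
    using exists_shifting_index_map[OF assms] by blast
  show ?thesis
    using that[OF E(2) \<kappa>(1,2) perturb_eigvecs_not_eigenvalue[OF sym E \<kappa>(1,3)]] .
qed

lemma poly_negligible_scaled:
  fixes emb :: "'b::euclidean_space \<Rightarrow> complex" and lift :: "real \<Rightarrow> 'b"
  assumes emb: "\<And>v. v \<in> {..<n} \<times> {..<r} \<Longrightarrow> cpoly_fun ({..<n} \<times> {..<r}) (\<lambda>g. emb (g v))"
    and lift: "\<And>t. emb (lift t) = complex_of_real t" and j: "j < n"
  shows "poly_negligible ({..<n} \<times> {..<r})
    (\<lambda>g. is_eigenvalue n (perturb r X \<theta> (scaled_cols n (\<lambda>i a. emb (g (a, i))))) (complex_of_real (lam j)))"
proof -
  let ?V = "{..<n} \<times> {..<r}"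
  obtain E \<kappa> where \<kappa>: "\<forall>i<r. \<kappa> i < n"
    and not_eig: "\<not> is_eigenvalue n (perturb r X \<theta> (\<lambda>i a. complex_of_real (E (\<kappa> i) a))) (complex_of_real (lam j))"
    using exists_eigvecs_perturb_not_eigenvalue[OF j] by blast
  define P where "P g = det (char_matrix (mat n n (\<lambda>(a, b).
      perturb r X \<theta> (scaled_cols n (\<lambda>i a. emb (g (a, i)))) a b)) (complex_of_real (lam j)))"
    for g :: "nat \<times> nat \<Rightarrow> 'b"
  have "cpoly_fun ?V P"
    unfolding P_def perturb_def scaled_cols_def
    by (intro cpoly_fun_det_char_matrix cpoly_fun_add cpoly_fun_sum cpoly_fun_mult cpoly_fun_cnj
        cpoly_fun_divide_const cpoly_fun_const emb) auto
  moreover define g0 where "g0 = restrict (\<lambda>(a, i). lift (sqrt (real n) * E (\<kappa> i) a)) ?V"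
  have "g0 \<in> space (PiM ?V (\<lambda>_. lborel::'b measure))"
    unfolding g0_def by (simp add: space_PiM)
  moreover have "P g0 \<noteq> 0"
  proof -
    have "sqrt (real n) \<noteq> 0"
      using r_less by simp
    then have "scaled_cols n (\<lambda>i a. emb (g0 (a, i))) i a = complex_of_real (E (\<kappa> i) a)"
      if "i < r" "a < n" for i a
      using that unfolding scaled_cols_def g0_def by (simp add: lift)
    then have "is_eigenvalue n (perturb r X \<theta> (scaled_cols n (\<lambda>i a. emb (g0 (a, i))))) (complex_of_real (lam j))
        \<longleftrightarrow> is_eigenvalue n (perturb r X \<theta> (\<lambda>i a. complex_of_real (E (\<kappa> i) a))) (complex_of_real (lam j))"
      by (intro is_eigenvalue_perturb_cong)
    with not_eig show ?thesis
      unfolding P_def is_eigenvalue_iff_det by simp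
  qed
  moreover have "is_eigenvalue n (perturb r X \<theta> (scaled_cols n (\<lambda>i a. emb (g (a, i))))) (complex_of_real (lam j))
      \<Longrightarrow> P g = 0" for g
    unfolding P_def by (simp add: is_eigenvalue_iff_det)
  ultimately show ?thesis
    unfolding poly_negligible_def by blast
qed

lemma poly_negligible_gram_schmidt:
  fixes emb :: "'b::euclidean_space \<Rightarrow> complex" and lift :: "real \<Rightarrow> 'b"
  assumes emb: "\<And>v. v \<in> {..<n} \<times> {..<r} \<Longrightarrow> cpoly_fun ({..<n} \<times> {..<r}) (\<lambda>g. emb (g v))"
    and lift: "\<And>t. emb (lift t) = complex_of_real t" and j: "j < n"
  shows "poly_negligible ({..<n} \<times> {..<r})
    (\<lambda>g. is_eigenvalue n (perturb r X \<theta> (gram_schmidt n r (\<lambda>i a. emb (g (a, i))))) (complex_of_real (lam j)))"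
proof -
  let ?V = "{..<n} \<times> {..<r}"
  obtain E \<kappa> where orth: "orthonormal_rows n E" and \<kappa>: "\<forall>i<r. \<kappa> i < n" "inj_on \<kappa> {..<r}"
    and not_eig: "\<not> is_eigenvalue n (perturb r X \<theta> (\<lambda>i a. complex_of_real (E (\<kappa> i) a))) (complex_of_real (lam j))"
    using exists_eigvecs_perturb_not_eigenvalue[OF j] by blast
  define C where "C g = (\<lambda>i a. emb (g (a, i)))" for g :: "nat \<times> nat \<Rightarrow> 'b"
  define D where "D g = gs_denom n r (C g)" for g
  define P where "P g = D g * det (char_matrix (mat n n (\<lambda>(a, b). perturb_cleared n r X \<theta> (C g) a b))
      (D g * complex_of_real (lam j)))" for g
  have cleared_poly: "cpoly_fun ?V (\<lambda>g. gs_cleared n (C g) i a)" if "i < r" "a < n" for i a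
    by (rule cpoly_fun_gs_cleared[OF _ that]) (auto simp: C_def intro: emb)
  have denom_poly: "cpoly_fun ?V D"
    unfolding D_def gs_denom_def by (intro cpoly_fun_prod cpoly_fun_cinner cleared_poly) auto
  have "cpoly_fun ?V P"
    unfolding P_def perturb_cleared_def D_def[symmetric]
    by (intro cpoly_fun_mult cpoly_fun_det_char_matrix cpoly_fun_add cpoly_fun_sum cpoly_fun_prod
        cpoly_fun_cinner cpoly_fun_cnj cpoly_fun_const denom_poly cleared_poly) auto
  moreover have "P g = 0"
    if "is_eigenvalue n (perturb r X \<theta> (gram_schmidt n r (C g))) (complex_of_real (lam j))" for g
    using that det_char_perturb_cleared[of n r "C g" X \<theta> "complex_of_real (lam j)"]
    unfolding P_def D_def is_eigenvalue_iff_det by auto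
  moreover define g0 where "g0 = restrict (\<lambda>(a, i). lift (E (\<kappa> i) a)) ?V"
  have "g0 \<in> space (PiM ?V (\<lambda>_. lborel::'b measure))"
    unfolding g0_def by (simp add: space_PiM)
  moreover have "P g0 \<noteq> 0"
  proof -
    have C0: "C g0 i a = complex_of_real (E (\<kappa> i) a)" if "i < r" "a < n" for i a
      using that unfolding C_def g0_def by (simp add: lift)
    have on: "orthonormal_family n r (C g0)"
      using orth \<kappa> C0 by (rule orthonormal_family_of_rows)
    then have "D g0 \<noteq> 0"
      unfolding D_def gs_denom_def using gs_cleared_orthonormal[OF on, THEN conjunct2] by simp
    moreover have "gram_schmidt n r (C g0) i a = complex_of_real (E (\<kappa> i) a)" if "i < r" "a < n" for i a
      using that gs_vec_orthonormal[OF on] by (simp add: gram_schmidt_eq_gs_vec C0)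
    then have "is_eigenvalue n (perturb r X \<theta> (gram_schmidt n r (C g0))) (complex_of_real (lam j))
        \<longleftrightarrow> is_eigenvalue n (perturb r X \<theta> (\<lambda>i a. complex_of_real (E (\<kappa> i) a))) (complex_of_real (lam j))"
      by (intro is_eigenvalue_perturb_cong)
    with not_eig have "\<not> is_eigenvalue n (perturb r X \<theta> (gram_schmidt n r (C g0))) (complex_of_real (lam j))"
      by simp
    ultimately show ?thesis
      using det_char_perturb_cleared[of n r "C g0" X \<theta> "complex_of_real (lam j)"]
      unfolding P_def D_def is_eigenvalue_iff_det by simp
  qed
  ultimately show ?thesis
    unfolding poly_negligible_def C_def by blast
qed

lemma null_sets_shares_eigenvalue:
  fixes A :: "('v \<Rightarrow> 'b::euclidean_space) \<Rightarrow> nat \<Rightarrow> nat \<Rightarrow> complex"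
  assumes fin: "finite V"
    and neg: "\<And>j. j < n \<Longrightarrow> poly_negligible V (\<lambda>g. is_eigenvalue n (A g) (complex_of_real (lam j)))"
  shows "{g \<in> space (completion (PiM V (\<lambda>_. lborel))). shares_eigenvalue n (A g) X}
    \<in> null_sets (completion (PiM V (\<lambda>_. lborel::'b measure)))"
proof -
  let ?M = "PiM V (\<lambda>_. lborel::'b measure)"
  have "\<forall>j. \<exists>N. j < n \<longrightarrow> N \<in> null_sets ?M
      \<and> {g \<in> space ?M. is_eigenvalue n (A g) (complex_of_real (lam j))} \<subseteq> N"
    using poly_negligible_null[OF fin neg] by blast
  then obtain N where N: "\<forall>j. j < n \<longrightarrow> N j \<in> null_sets ?M
      \<and> {g \<in> space ?M. is_eigenvalue n (A g) (complex_of_real (lam j))} \<subseteq> N j"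
    by (rule choice[THEN exE])
  have "{g \<in> space (completion ?M). shares_eigenvalue n (A g) X} \<subseteq> (\<Union>j<n. N j)"
  proof
    fix g assume "g \<in> {g \<in> space (completion ?M). shares_eigenvalue n (A g) X}"
    then obtain \<mu> where g: "g \<in> space ?M" "is_eigenvalue n (A g) \<mu>"
      and "is_eigenvalue n (\<lambda>a b. complex_of_real (X a b)) \<mu>"
      unfolding shares_eigenvalue_def by auto
    then obtain j where "j < n" "\<mu> = complex_of_real (lam j)"
      using complexified_eigenvalue by blast
    with g N show "g \<in> (\<Union>j<n. N j)"
      by blast
  qed
  moreover have "(\<Union>j<n. N j) \<in> null_sets ?M"
    using N by (intro null_sets.finite_UN) auto
  ultimately show ?thesis
    unfolding null_sets_completion_iff2 by blast
qed

lemma null_sets_shares_eigenvalue_cols: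
  fixes emb :: "'b::euclidean_space \<Rightarrow> complex" and lift :: "real \<Rightarrow> 'b"
  assumes "\<And>v. v \<in> {..<n} \<times> {..<r} \<Longrightarrow> cpoly_fun ({..<n} \<times> {..<r}) (\<lambda>g. emb (g v))"
    and "\<And>t. emb (lift t) = complex_of_real t"
  shows "{g \<in> space (completion (PiM ({..<n} \<times> {..<r}) (\<lambda>_. lborel))).
      shares_eigenvalue n (perturb r X \<theta> (scaled_cols n (\<lambda>i a. emb (g (a, i))))) X}
    \<in> null_sets (completion (PiM ({..<n} \<times> {..<r}) (\<lambda>_. lborel::'b measure)))"
    and "{g \<in> space (completion (PiM ({..<n} \<times> {..<r}) (\<lambda>_. lborel))).
      shares_eigenvalue n (perturb r X \<theta> (gram_schmidt n r (\<lambda>i a. emb (g (a, i))))) X}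
    \<in> null_sets (completion (PiM ({..<n} \<times> {..<r}) (\<lambda>_. lborel::'b measure)))"
  using assms
  by (auto intro!: null_sets_shares_eigenvalue poly_negligible_scaled poly_negligible_gram_schmidt
      simp del: space_completion)

end

theorem lemma11p2:
  fixes n r :: nat and X :: "nat \<Rightarrow> nat \<Rightarrow> real" and lam \<theta> :: "nat \<Rightarrow> real"
    and idx :: "nat \<Rightarrow> nat"
  assumes "1 \<le> r" and "r < n"
    and sym: "\<forall>a<n. \<forall>b<n. X a b = X b a"
    and eig: "{\<mu>. is_eigenvalue n X \<mu>} = lam ` {..<n}"
    and dist: "inj_on lam {..<n}"
    and theta: "\<forall>i<r. \<theta> i \<noteq> 0"
    and idx_range: "\<forall>k<r - 1. idx k < n"
    and idx_inj: "inj_on idx {..<r - 1}"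
    and H: "(\<lambda>k. lam (idx k) + \<theta> k) ` {..<r - 1} \<inter> lam ` {..<n} = {}"
  shows
    "{g \<in> space (leb_R n r).
        shares_eigenvalue n (perturb r X \<theta> (scaled_cols n (cols_R g))) X} \<in> null_sets (leb_R n r)
   \<and> {g \<in> space (leb_R n r). lin_indep_cols n r (\<lambda>j a. g (a, j)) \<and>
        shares_eigenvalue n (perturb r X \<theta> (gram_schmidt n r (cols_R g))) X} \<in> null_sets (leb_R n r)
   \<and> {g \<in> space (leb_C n r).
        shares_eigenvalue n (perturb r X \<theta> (scaled_cols n (cols_C g))) X} \<in> null_sets (leb_C n r)
   \<and> {g \<in> space (leb_C n r). lin_indep_cols n r (cols_C g) \<and>
        shares_eigenvalue n (perturb r X \<theta> (gram_schmidt n r (cols_C g))) X} \<in> null_sets (leb_C n r)"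
proof -
  interpret simple_spectrum_perturbation n r X lam \<theta> idx
    using assms by unfold_locales
  have real: "{g \<in> space (leb_R n r). shares_eigenvalue n (perturb r X \<theta> (scaled_cols n (cols_R g))) X}
      \<in> null_sets (leb_R n r)"
    "{g \<in> space (leb_R n r). shares_eigenvalue n (perturb r X \<theta> (gram_schmidt n r (cols_R g))) X}
      \<in> null_sets (leb_R n r)"
    using null_sets_shares_eigenvalue_cols[OF cpoly_fun_coord_real refl]
    unfolding leb_R_def cols_R_def by simp_all
  have complex: "{g \<in> space (leb_C n r). shares_eigenvalue n (perturb r X \<theta> (scaled_cols n (cols_C g))) X}
      \<in> null_sets (leb_C n r)"
    "{g \<in> space (leb_C n r). shares_eigenvalue n (perturb r X \<theta> (gram_schmidt n r (cols_C g))) X}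
      \<in> null_sets (leb_C n r)"
    using null_sets_shares_eigenvalue_cols[OF cpoly_fun_coord_complex refl]
    unfolding leb_C_def cols_C_def by simp_all
  show ?thesis
    using real complex unfolding leb_R_def leb_C_def
    by (blast intro: null_sets_completion_subset[rotated])
qed

end
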